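(* For all $n,k\in\mathbb Z$, \[ \binom{n}{k}_w=\binom{n}{n-k}_{\widehat w}\prod_{j=1}^{k}W(j,n-k), \] where $\widehat w(s,t)=w(t,s)^{-1}$.
   Context: $(w(s,t))_{s,t\in\mathbb Z}$ are commuting invertible variables. Product convention: $\prod_{j=l}^m A_j=A_l\cdots A_m$ if $m>l-1$, $=1$ if $m=l-1$, $=A_{l-1}^{-1}\cdots A_{m+1}^{-1}$ if $m<l-1$. For any such weight family $v$, set $W_v(s,t)=\prod_{j=1}^t v(s,j)$ (and $W=W_w$), and let $\binom{n}{k}_v$ ($n,k\in\mathbb Z$) be the unique family with $\binom{n}{0}_v=\binom{n}{n}_v=1$ for all $n\in\mathbb Z$ and $\binom{n+1}{k}_v=\binom{n}{k}_v+\binom{n}{k-1}_v W_v(k,n+1-k)$ for all $n,k$ with $(n+1,k)\ne(0,0)$. *)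

theory Defs
  imports Main
begin

definition prodz :: "(int \<Rightarrow> 'a::field) \<Rightarrow> int \<Rightarrow> int \<Rightarrow> 'a" where
  "prodz A l m =
     (if m > l - 1 then (\<Prod>j\<in>{l..m}. A j)
      else if m = l - 1 then 1
      else (\<Prod>j\<in>{m+1..l-1}. inverse (A j)))"

definition Wt :: "(int \<Rightarrow> int \<Rightarrow> 'a::field) \<Rightarrow> int \<Rightarrow> int \<Rightarrow> 'a" where
  "Wt v s t = prodz (\<lambda>j. v s j) 1 t"

definition is_wbinom_family :: "(int \<Rightarrow> int \<Rightarrow> 'a::field) \<Rightarrow> (int \<Rightarrow> int \<Rightarrow> 'a) \<Rightarrow> bool" where
  "is_wbinom_family v B \<longleftrightarrow>
     (\<forall>n. B n 0 = 1 \<and> B n n = 1) \<and>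
     (\<forall>n k. (n + 1, k) \<noteq> (0, 0) \<longrightarrow>
        B (n + 1) k = B n k + B n (k - 1) * Wt v k (n + 1 - k))"

definition wbinom :: "(int \<Rightarrow> int \<Rightarrow> 'a::field) \<Rightarrow> int \<Rightarrow> int \<Rightarrow> 'a" where
  "wbinom v = (THE B. is_wbinom_family v B)"

end

theory Submission
  imports Defs
begin

(* Off the lines k = 0 and k = n, the recurrence expresses each value through two values of
   smaller |k| + 2|n - k|: forward in n when 0 < k < n, backward in n when n < k, and leftward
   in k when k < min 0 n (dividing by a weight, whence the nonvanishing hypothesis). So there
   is at most one family, and the same three rules, read as a definition by well-founded
   recursion, produce one.
   The right-hand side of the theorem satisfies the boundary conditions and the recurrence
   for w: the reflected recurrence at (n, n + 1 - k) carries the weight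
   (prod_{j=1}^k w(j, n + 1 - k))^-1, which is exactly the factor by which
   prod_{j=1}^k W(j, n - k) grows when n increases by one. *)

lemma prodz_eq_divide: "prodz A l m = (\<Prod>j\<in>{l..m}. A j) / (\<Prod>j\<in>{m+1..l-1}. A j)"
  unfolding prodz_def by (auto simp: prod_inversef[unfolded comp_def] divide_inverse)

lemma prodz_mult: "prodz (\<lambda>j. A j * B j) l m = prodz A l m * prodz B l m"
  unfolding prodz_eq_divide by (simp add: prod.distrib)

lemma prodz_inverse: "prodz (\<lambda>j. inverse (A j)) l m = inverse (prodz A l m)"
  unfolding prodz_eq_divide
  by (simp add: prod_inversef[unfolded comp_def] divide_inverse mult.commute)

lemma prodz_one [simp]: "prodz (\<lambda>j. 1) l m = 1"
  unfolding prodz_eq_divide by simp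

lemma prodz_nonzero: "(\<And>j. A j \<noteq> 0) \<Longrightarrow> prodz A l m \<noteq> 0"
  unfolding prodz_eq_divide by simp

lemma prodz_last:
  assumes "A m \<noteq> 0"
  shows "prodz A l m = prodz A l (m - 1) * A m"
proof (cases "l \<le> m")
  case True
  then have "{l..m} = insert m {l..m - 1}" by auto
  with True show ?thesis unfolding prodz_eq_divide by simp
next
  case False
  then have "{m..l - 1} = insert m {m + 1..l - 1}" by auto
  with False assms show ?thesis unfolding prodz_eq_divide by simp
qed

lemma Wt_0 [simp]: "Wt v s 0 = 1"
  unfolding Wt_def by (simp add: prodz_def)

lemma Wt_nonzero: "(\<And>t. v s t \<noteq> 0) \<Longrightarrow> Wt v s t \<noteq> 0"
  unfolding Wt_def by (rule prodz_nonzero)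

lemma Wt_succ: "v s (t + 1) \<noteq> 0 \<Longrightarrow> Wt v s (t + 1) = Wt v s t * v s (t + 1)"
  unfolding Wt_def by (simp add: prodz_last[of _ "t + 1"])

lemma Wt_transpose_inverse:
  "Wt (\<lambda>s t. inverse (w t s)) s t = inverse (prodz (\<lambda>j. w j s) 1 t)"
  unfolding Wt_def by (rule prodz_inverse)

lemma pascal_recurrence_eq_0:
  fixes E c :: "int \<Rightarrow> int \<Rightarrow> 'a::semiring_no_zero_divisors"
  assumes edge0: "\<And>n. E n 0 = 0" and diag: "\<And>n. E n n = 0"
    and rec: "\<And>n k. (n + 1, k) \<noteq> (0, 0) \<Longrightarrow> E (n + 1) k = E n k + E n (k - 1) * c n k"
    and c_nonzero: "\<And>n k. c n k \<noteq> 0"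
  shows "E n k = 0"
  \<comment> \<open>weight 2: for n < k < 0 the step to (n, k - 1) leaves \<open>\<bar>k\<bar> + \<bar>n - k\<bar>\<close> unchanged\<close>
proof (induction "nat (\<bar>k\<bar> + 2 * \<bar>n - k\<bar>)" arbitrary: n k rule: less_induct)
  case less
  consider "k = 0 \<or> k = n" | "0 < k \<and> k < n" | "n < k \<and> k \<noteq> 0" | "k < n \<and> k < 0"
    by linarith
  then show ?case
  proof cases
    case 1
    then show ?thesis using edge0 diag by auto
  next
    case 2
    have "E (n - 1) k = 0" "E (n - 1) (k - 1) = 0"
      using 2 by (auto intro!: less)
    then show ?thesis using rec[of "n - 1" k] 2 by simp
  next
    case 3
    have "E (n + 1) k = 0" "E n (k - 1) = 0"
      using 3 by (auto intro!: less)
    then show ?thesis using rec[of n k] 3 by simp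
  next
    case 4
    have "E (n + 1) (k + 1) = 0" "E n (k + 1) = 0"
      using 4 by (auto intro!: less)
    then show ?thesis using rec[of n "k + 1"] 4 c_nonzero by simp
  qed
qed

function wbinom_rec :: "(int \<Rightarrow> int \<Rightarrow> 'a::field) \<Rightarrow> int \<Rightarrow> int \<Rightarrow> 'a" where
  "wbinom_rec v n k =
     (if k = 0 \<or> k = n then 1
      else if 0 < k \<and> k < n then
        wbinom_rec v (n - 1) k + wbinom_rec v (n - 1) (k - 1) * Wt v k (n - k)
      else if 0 < k then
        wbinom_rec v (n + 1) k - wbinom_rec v n (k - 1) * Wt v k (n + 1 - k)
      else if k < n then
        (wbinom_rec v (n + 1) (k + 1) - wbinom_rec v n (k + 1)) / Wt v (k + 1) (n - k)
      else 0)"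
  by auto
termination
  by (relation "measure (\<lambda>(v, n, k). nat (\<bar>k\<bar> + 2 * \<bar>n - k\<bar>))") auto

declare wbinom_rec.simps [simp del]

lemma is_wbinom_family_wbinom_rec:
  assumes v_nonzero: "\<And>s t. v s t \<noteq> 0"
  shows "is_wbinom_family v (wbinom_rec v)"
  unfolding is_wbinom_family_def
proof (intro conjI allI impI)
  fix n k :: int
  show "wbinom_rec v n 0 = 1" "wbinom_rec v n n = 1"
    by (simp_all add: wbinom_rec.simps)
  assume off_origin: "(n + 1, k) \<noteq> (0, 0)"
  then consider "k = 0" | "k = n + 1" | "0 < k \<and> k < n + 1" | "0 < k \<and> n + 1 < k"
    | "k < 0 \<and> n + 1 < k" | "k < 0 \<and> k \<le> n"
    by linarith
  then show "wbinom_rec v (n + 1) k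
      = wbinom_rec v n k + wbinom_rec v n (k - 1) * Wt v k (n + 1 - k)"
  proof cases
    case 1
    with off_origin show ?thesis
      by (simp add: wbinom_rec.simps[of v _ 0] wbinom_rec.simps[of v n "-1"])
  next
    case 2
    with off_origin show ?thesis
      by (simp add: wbinom_rec.simps[of v m m for m] wbinom_rec.simps[of v n "n + 1"])
  next
    case 3
    then show ?thesis by (subst wbinom_rec.simps) simp
  next
    case 4
    then show ?thesis by (subst (2) wbinom_rec.simps) simp
  next
    case 5
    then show ?thesis by (simp add: wbinom_rec.simps[of v _ k] wbinom_rec.simps[of v n "k - 1"])
  next
    case 6
    then show ?thesis using Wt_nonzero[of v k "n + 1 - k"] v_nonzero
      by (simp add: wbinom_rec.simps[of v n "k - 1"] field_simps)
  qed
qed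

lemma is_wbinom_family_unique:
  assumes "\<And>s t. v s t \<noteq> 0"
    and "is_wbinom_family v B1" and "is_wbinom_family v B2"
  shows "B1 = B2"
proof -
  have "B1 n k - B2 n k = 0" for n k
    by (rule pascal_recurrence_eq_0[where E = "\<lambda>n k. B1 n k - B2 n k"
          and c = "\<lambda>n k. Wt v k (n + 1 - k)"])
      (use assms in \<open>auto simp: is_wbinom_family_def Wt_nonzero algebra_simps\<close>)
  then show ?thesis by auto
qed

lemma wbinom_eqI:
  assumes "\<And>s t. v s t \<noteq> 0" and "is_wbinom_family v B"
  shows "wbinom v = B"
  unfolding wbinom_def
  using assms is_wbinom_family_wbinom_rec is_wbinom_family_unique by (metis the_equality)

lemma is_wbinom_family_wbinom:
  assumes "\<And>s t. v s t \<noteq> 0"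
  shows "is_wbinom_family v (wbinom v)"
  using assms is_wbinom_family_wbinom_rec wbinom_eqI by metis

lemma is_wbinom_family_reflect:
  fixes w :: "int \<Rightarrow> int \<Rightarrow> 'a::field"
  assumes w_nonzero: "\<And>s t. w s t \<noteq> 0"
    and family: "is_wbinom_family (\<lambda>s t. inverse (w t s)) B"
  shows "is_wbinom_family w (\<lambda>n k. B n (n - k) * prodz (\<lambda>j. Wt w j (n - k)) 1 k)"
proof -
  define P where "P n k = prodz (\<lambda>j. Wt w j (n - k)) 1 k" for n k
  have "B (n + 1) (n + 1 - k) * P (n + 1) k
          = B n (n - k) * P n k + B n (n + 1 - k) * P n (k - 1) * Wt w k (n + 1 - k)"
    if off_origin: "(n + 1, k) \<noteq> (0, 0)" for n k
  proof -
    define Q where "Q = prodz (\<lambda>j. w j (n + 1 - k)) 1 k"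
    have "Q \<noteq> 0"
      unfolding Q_def using w_nonzero by (rule prodz_nonzero)
    have "B (n + 1) (n + 1 - k) = B n (n + 1 - k)
        + B n (n + 1 - k - 1) * Wt (\<lambda>s t. inverse (w t s)) (n + 1 - k) (n + 1 - (n + 1 - k))"
      using family off_origin unfolding is_wbinom_family_def by auto
    then have B_rec: "B (n + 1) (n + 1 - k) = B n (n + 1 - k) + B n (n - k) * inverse Q"
      by (simp add: Wt_transpose_inverse Q_def)
    have Wt_step: "Wt w j (n + 1 - k) = Wt w j (n - k) * w j (n + 1 - k)" for j
      using Wt_succ[of w j "n - k"] w_nonzero by (simp add: algebra_simps)
    have P_rescale: "P (n + 1) k = P n k * Q"
      unfolding P_def Q_def Wt_step by (rule prodz_mult)
    have P_last: "P (n + 1) k = P n (k - 1) * Wt w k (n + 1 - k)"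
    proof -
      have "n - (k - 1) = n + 1 - k" by simp
      then show ?thesis
        unfolding P_def \<open>n - (k - 1) = n + 1 - k\<close>
        using prodz_last[of "\<lambda>j. Wt w j (n + 1 - k)" k 1] w_nonzero by (simp add: Wt_nonzero)
    qed
    have "B (n + 1) (n + 1 - k) * P (n + 1) k
            = B n (n + 1 - k) * P (n + 1) k + B n (n - k) * inverse Q * P (n + 1) k"
      unfolding B_rec by (simp add: distrib_right)
    also have "\<dots> = B n (n + 1 - k) * P n (k - 1) * Wt w k (n + 1 - k) + B n (n - k) * P n k"
      using \<open>Q \<noteq> 0\<close> by (subst (1) P_last, subst P_rescale) simp
    finally show ?thesis by simp
  qed
  moreover have "P n 0 = 1" "P n n = 1" for n
    unfolding P_def by (simp_all add: prodz_def)
  ultimately show ?thesis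
    using family unfolding is_wbinom_family_def P_def[symmetric] by (simp add: algebra_simps)
qed

theorem theorem5:
  fixes w :: "int \<Rightarrow> int \<Rightarrow> 'a::field" and n k :: int
  assumes "\<And>s t. w s t \<noteq> 0"
  shows "wbinom w n k =
           wbinom (\<lambda>s t. inverse (w t s)) n (n - k) * prodz (\<lambda>j. Wt w j (n - k)) 1 k"
proof -
  have "is_wbinom_family (\<lambda>s t. inverse (w t s)) (wbinom (\<lambda>s t. inverse (w t s)))"
    using assms by (intro is_wbinom_family_wbinom) simp
  with assms have "wbinom w =
      (\<lambda>n k. wbinom (\<lambda>s t. inverse (w t s)) n (n - k) * prodz (\<lambda>j. Wt w j (n - k)) 1 k)"
    by (intro wbinom_eqI is_wbinom_family_reflect)
  then show ?thesis by simp
qed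

end
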